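(* There is an absolute constant $c>0$ such that for every $n,m\ge1$, every sequence $S\in[n]^m$ and every initial BST $T$ on $[n]$, $$\mathbb E_\pi\bigl[\mathrm{MTR}_T(\pi(S))\bigr]\le c\Bigl(\mathit{WS}(S)+m+\sum_{i=1}^n d_T(i)\Bigr),$$ where the expectation is over a uniformly random permutation $\pi$ of $[n]$.
   Context: For $S=(s_1,\dots,s_m)$ and a permutation $\pi$ of $[n]$, let $\pi(S)=(\pi(s_1),\dots,\pi(s_m))$. Move-to-root: each accessed key $x$ is found by searching from the root, at cost equal to the number of nodes on the root-to-$x$ path, i.e. $d(x)+1$ with $d$ the current depth (root at depth $0$). Then $x$ is rotated to the root by single rotations. $\mathrm{MTR}_T(S)$ is the total cost of Move-to-root on $S$ starting from the tree $T$, and $d_T(i)$ is the depth of $i$ in $T$. Working set bound: for $j\le m$, let $\rho(j)=\max\{k<j: s_k=s_j\}$, with $\rho(j)=0$ if there is no such $k$. Let $w_S(j)=\{s_i:\rho(j)<i\le j\}$. Then $\mathit{WS}(S)=\sum_{j=1}^m\log_2|w_S(j)|$. *)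

theory Defs
  imports Complex_Main "HOL-Library.Tree" "HOL-Combinatorics.Permutations"
begin

fun depth :: "nat \<Rightarrow> nat tree \<Rightarrow> nat" where
  "depth x Leaf = 0"
| "depth x (Node l y r) =
     (if x = y then 0 else if x < y then Suc (depth x l) else Suc (depth x r))"

fun mtr :: "nat \<Rightarrow> nat tree \<Rightarrow> nat tree" where
  "mtr x Leaf = Leaf"
| "mtr x (Node l y r) =
     (if x = y then Node l y r
      else if x < y then
        (case mtr x l of Leaf \<Rightarrow> Node l y r
         | Node a z b \<Rightarrow> Node a z (Node b y r))
      else
        (case mtr x r of Leaf \<Rightarrow> Node l y r
         | Node a z b \<Rightarrow> Node (Node l y a) z b))"

fun mtr_cost :: "nat tree \<Rightarrow> nat list \<Rightarrow> nat" where
  "mtr_cost T [] = 0"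
| "mtr_cost T (x # xs) = depth x T + 1 + mtr_cost (mtr x T) xs"

text \<open>Working-set bound; positions are 1-based: s_j = S ! (j - 1).\<close>
definition rho :: "nat list \<Rightarrow> nat \<Rightarrow> nat" where
  "rho S j = (if \<exists>k. 1 \<le> k \<and> k < j \<and> S ! (k - 1) = S ! (j - 1)
              then Max {k. 1 \<le> k \<and> k < j \<and> S ! (k - 1) = S ! (j - 1)} else 0)"

definition ws_set :: "nat list \<Rightarrow> nat \<Rightarrow> nat set" where
  "ws_set S j = {S ! (i - 1) | i. rho S j < i \<and> i \<le> j}"

definition WS :: "nat list \<Rightarrow> real" where
  "WS S = (\<Sum>j = 1..length S. log 2 (real (card (ws_set S j))))"

definition expected_mtr :: "nat \<Rightarrow> nat tree \<Rightarrow> nat list \<Rightarrow> real" where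
  "expected_mtr n T S =
     (\<Sum>\<pi> \<in> {\<pi>. \<pi> permutes {1..n}}. real (mtr_cost T (map \<pi> S)))
       / real (card {\<pi>. \<pi> permutes {1..n}})"

end

theory Submission
  imports Defs "HOL-Analysis.Harmonic_Numbers"
begin

text \<open>Move-to-root keeps the tree a treap: if keys are prioritised by the time of their last access
  (never-accessed keys below all others, ordered by their depth in \<open>T\<close>), every tree reached is
  heap-ordered, so a key \<open>y\<close> is a proper ancestor of \<open>x\<close> iff \<open>y\<close> has the highest priority among the
  keys between \<open>x\<close> and \<open>y\<close>. Never-accessed ancestors of an accessed key are ancestors in \<open>T\<close>, and
  they only occur at the first access of that key, which accounts for \<open>\<Sum> d\<^sub>T(i)\<close>.
  An accessed ancestor \<open>\<pi> u\<close> of \<open>\<pi> x\<close> was last accessed after \<open>x\<close>, so \<open>u\<close> is in the working set of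
  the access, and no key of the working set accessed after \<open>u\<close> is mapped by \<open>\<pi>\<close> strictly between
  \<open>\<pi> x\<close> and \<open>\<pi> u\<close>. By symmetry of a uniformly random \<open>\<pi>\<close>, this happens with probability at most
  \<open>2 / r\<close> when \<open>r\<close> such keys are involved; these counts are distinct for the keys of the working set
  \<open>w\<close>, so the expected number of accessed ancestors is at most a harmonic sum \<open>2 H(|w| - 1)\<close>, which
  is \<open>O(1 + log |w|)\<close>.\<close>

section \<open>Move-to-root and treaps\<close>

lemma set_tree_mtr [simp]: "set_tree (mtr x t) = set_tree t"
proof (induction x t rule: mtr.induct)
  case (2 x l y r)
  consider "x = y" | "x \<noteq> y" "x < y" | "x \<noteq> y" "\<not> x < y" by blast
  then show ?case
  proof cases
    case 2
    then show ?thesis using "2.IH"(1)[OF 2] by (cases "mtr x l") auto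
  next
    case 3
    then show ?thesis using "2.IH"(2)[OF 3] by (cases "mtr x r") auto
  qed simp
qed simp

lemma mtr_root: "bst t \<Longrightarrow> x \<in> set_tree t \<Longrightarrow> \<exists>l r. mtr x t = Node l x r"
proof (induction x t rule: mtr.induct)
  case (2 x l y r)
  consider "x = y" | "x < y" "x \<in> set_tree l" | "y < x" "x \<in> set_tree r"
    using "2.prems" by fastforce
  then show ?case
  proof cases
    case 2
    then obtain a b where "mtr x l = Node a x b" using "2.IH"(1) "2.prems"(1) by fastforce
    then show ?thesis using 2 by simp
  next
    case 3
    then obtain a b where "mtr x r = Node a x b" using "2.IH"(2) "2.prems"(1) by fastforce
    then show ?thesis using 3 by simp
  qed simp
qed simp

lemma bst_mtr: "bst t \<Longrightarrow> x \<in> set_tree t \<Longrightarrow> bst (mtr x t)"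
proof (induction x t rule: mtr.induct)
  case (2 x l y r)
  consider "x = y" | "x < y" "x \<in> set_tree l" | "y < x" "x \<in> set_tree r"
    using "2.prems" by fastforce
  then show ?case
  proof cases
    case 2
    obtain a b where ab: "mtr x l = Node a x b" using mtr_root "2.prems"(1) 2 by fastforce
    have "bst (Node a x b)" "set_tree l = set_tree a \<union> {x} \<union> set_tree b"
      using "2.IH"(1) "2.prems"(1) 2 ab set_tree_mtr[of x l] by auto
    then show ?thesis using "2.prems"(1) 2 ab by auto
  next
    case 3
    obtain a b where ab: "mtr x r = Node a x b" using mtr_root "2.prems"(1) 3 by fastforce
    have "bst (Node a x b)" "set_tree r = set_tree a \<union> {x} \<union> set_tree b"
      using "2.IH"(2) "2.prems"(1) 3 ab set_tree_mtr[of x r] by auto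
    then show ?thesis using "2.prems"(1) 3 ab by auto
  qed (use "2.prems" in simp)
qed simp

fun prio_heap :: "(nat \<Rightarrow> 'b::linorder) \<Rightarrow> nat tree \<Rightarrow> bool" where
  "prio_heap p Leaf = True"
| "prio_heap p (Node l y r) =
     ((\<forall>k \<in> set_tree l \<union> set_tree r. p k < p y) \<and> prio_heap p l \<and> prio_heap p r)"

lemma prio_heap_cong:
  "(\<And>k. k \<in> set_tree t \<Longrightarrow> p k = q k) \<Longrightarrow> prio_heap p t = prio_heap q t"
  by (induction t) auto

lemma prio_heap_fun_upd_notin:
  "x \<notin> set_tree t \<Longrightarrow> prio_heap (p(x := c)) t = prio_heap p t"
  by (rule prio_heap_cong) auto

lemma prio_heap_mtr:
  assumes "bst t" "prio_heap p t" "x \<in> set_tree t" "\<forall>k \<in> set_tree t. p k < c"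
  shows "prio_heap (p(x := c)) (mtr x t)"
  using assms
proof (induction x t rule: mtr.induct)
  case (2 x l y r)
  consider "x = y" | "x < y" "x \<in> set_tree l" | "y < x" "x \<in> set_tree r"
    using "2.prems" by fastforce
  then show ?case
  proof cases
    case 1
    then have "x \<notin> set_tree l" "x \<notin> set_tree r" using "2.prems"(1) by auto
    then show ?thesis
      using "2.prems" 1 prio_heap_fun_upd_notin[of x l p c] prio_heap_fun_upd_notin[of x r p c]
      by (auto simp del: fun_upd_apply) auto
  next
    case 2
    obtain a b where ab: "mtr x l = Node a x b"
      using mtr_root "2.prems"(1) 2 by fastforce
    have l: "set_tree l = set_tree a \<union> {x} \<union> set_tree b" "x \<notin> set_tree a" "x \<notin> set_tree b"
      using ab set_tree_mtr[of x l] bst_mtr[of l x] "2.prems"(1) 2 by auto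
    have "x \<notin> set_tree r" using "2.prems"(1) 2 by fastforce
    then have "prio_heap (p(x := c)) r" using "2.prems"(2) prio_heap_fun_upd_notin by auto
    moreover have "prio_heap (p(x := c)) (mtr x l)"
      by (rule "2.IH"(1)) (use "2.prems" 2 in auto)
    moreover have "\<forall>k \<in> set_tree b \<union> set_tree r. (p(x := c)) k < (p(x := c)) y"
      "\<forall>k \<in> set_tree a \<union> set_tree (Node b y r). (p(x := c)) k < (p(x := c)) x"
      using "2.prems" 2 l \<open>x \<notin> set_tree r\<close> by auto
    ultimately show ?thesis using 2 by (simp add: ab del: fun_upd_apply)
  next
    case 3
    obtain a b where ab: "mtr x r = Node a x b"
      using mtr_root "2.prems"(1) 3 by fastforce
    have r: "set_tree r = set_tree a \<union> {x} \<union> set_tree b" "x \<notin> set_tree a" "x \<notin> set_tree b"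
      using ab set_tree_mtr[of x r] bst_mtr[of r x] "2.prems"(1) 3 by auto
    have "x \<notin> set_tree l" using "2.prems"(1) 3 by fastforce
    then have "prio_heap (p(x := c)) l" using "2.prems"(2) prio_heap_fun_upd_notin by auto
    moreover have "prio_heap (p(x := c)) (mtr x r)"
      by (rule "2.IH"(2)) (use "2.prems" 3 in auto)
    moreover have "\<forall>k \<in> set_tree l \<union> set_tree a. (p(x := c)) k < (p(x := c)) y"
      "\<forall>k \<in> set_tree (Node l y a) \<union> set_tree b. (p(x := c)) k < (p(x := c)) x"
      using "2.prems" 3 r \<open>x \<notin> set_tree l\<close> by auto
    ultimately show ?thesis using 3 by (simp add: ab del: fun_upd_apply)
  qed
qed simp

lemma prio_heap_depth: "bst t \<Longrightarrow> prio_heap (\<lambda>k. c - int (depth k t)) t"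
proof (induction t arbitrary: c)
  case (Node l y r)
  have "prio_heap (\<lambda>k. c - int (depth k (Node l y r))) l"
    using Node.IH(1)[of "c - 1"] Node.prems
    by (subst prio_heap_cong[where q = "\<lambda>k. c - 1 - int (depth k l)"]) auto
  moreover have "prio_heap (\<lambda>k. c - int (depth k (Node l y r))) r"
    using Node.IH(2)[of "c - 1"] Node.prems
    by (subst prio_heap_cong[where q = "\<lambda>k. c - 1 - int (depth k r)"]) auto
  ultimately show ?case using Node.prems by auto
qed simp

definition ancestors :: "(nat \<Rightarrow> 'b::linorder) \<Rightarrow> nat tree \<Rightarrow> nat \<Rightarrow> nat set" where
  "ancestors p t x = {y \<in> set_tree t. y \<noteq> x \<and>
     (\<forall>k \<in> set_tree t. min x y \<le> k \<and> k \<le> max x y \<and> k \<noteq> y \<longrightarrow> p k < p y)}"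

lemma prio_less_ancestor:
  "y \<in> ancestors p t x \<Longrightarrow> x \<in> set_tree t \<Longrightarrow> p x < p y"
  unfolding ancestors_def by auto

lemma ancestors_root:
  assumes "prio_heap p (Node l x r)"
  shows "ancestors p (Node l x r) x = {}"
proof -
  have False if y: "y \<in> ancestors p (Node l x r) x" for y
  proof -
    have "y \<in> set_tree l \<union> set_tree r" "p x < p y"
      using y unfolding ancestors_def by (auto dest: bspec[of _ _ x])
    moreover have "p y < p x" using calculation(1) assms by auto
    ultimately show False by simp
  qed
  then show ?thesis by blast
qed

lemma ancestors_Node_left:
  assumes "bst (Node l y r)" "prio_heap p (Node l y r)" "x \<in> set_tree l"
  shows "ancestors p (Node l y r) x = insert y (ancestors p l x)"
proof (intro set_eqI iffI)
  fix z assume z: "z \<in> ancestors p (Node l y r) x"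
  have "z \<notin> set_tree r"
  proof
    assume "z \<in> set_tree r"
    then have "p y < p z" using z assms by (fastforce simp: ancestors_def)
    then show False using \<open>z \<in> set_tree r\<close> assms(2) by (auto dest: less_asym)
  qed
  then show "z \<in> insert y (ancestors p l x)" using z by (auto simp: ancestors_def)
next
  fix z assume z: "z \<in> insert y (ancestors p l x)"
  have below_y: "k \<in> set_tree l" if "k \<in> set_tree (Node l y r)" "k < y" for k
    using that assms(1) by auto
  show "z \<in> ancestors p (Node l y r) x"
  proof (cases "z = y")
    case True
    with assms show ?thesis by (auto simp: ancestors_def dest: below_y)
  next
    case False
    with z have "z \<in> ancestors p l x" by simp
    moreover have "x < y" "z < y" using calculation assms(1,3) by (auto simp: ancestors_def)
    then have "k \<in> set_tree l" if "k \<in> set_tree (Node l y r)" "k \<le> max x z" for k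
      using that by (intro below_y) (auto simp: max_def split: if_splits)
    ultimately show ?thesis by (auto simp: ancestors_def)
  qed
qed

lemma ancestors_Node_right:
  assumes "bst (Node l y r)" "prio_heap p (Node l y r)" "x \<in> set_tree r"
  shows "ancestors p (Node l y r) x = insert y (ancestors p r x)"
proof (intro set_eqI iffI)
  fix z assume z: "z \<in> ancestors p (Node l y r) x"
  have "z \<notin> set_tree l"
  proof
    assume "z \<in> set_tree l"
    then have "p y < p z" using z assms by (fastforce simp: ancestors_def)
    then show False using \<open>z \<in> set_tree l\<close> assms(2) by (auto dest: less_asym)
  qed
  then show "z \<in> insert y (ancestors p r x)" using z by (auto simp: ancestors_def)
next
  fix z assume z: "z \<in> insert y (ancestors p r x)"
  have above_y: "k \<in> set_tree r" if "k \<in> set_tree (Node l y r)" "y < k" for k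
    using that assms(1) by auto
  show "z \<in> ancestors p (Node l y r) x"
  proof (cases "z = y")
    case True
    with assms show ?thesis by (auto simp: ancestors_def dest: above_y)
  next
    case False
    with z have "z \<in> ancestors p r x" by simp
    moreover have "y < x" "y < z" using calculation assms(1,3) by (auto simp: ancestors_def)
    then have "k \<in> set_tree r" if "k \<in> set_tree (Node l y r)" "min x z \<le> k" for k
      using that by (intro above_y) (auto simp: min_def split: if_splits)
    ultimately show ?thesis by (auto simp: ancestors_def)
  qed
qed

lemma depth_eq_card_ancestors:
  "bst t \<Longrightarrow> prio_heap p t \<Longrightarrow> x \<in> set_tree t \<Longrightarrow> depth x t = card (ancestors p t x)"
proof (induction t)
  case (Node l y r)
  have fin: "finite (ancestors p t x)" for t :: "nat tree"
    unfolding ancestors_def by simp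
  consider "x = y" | "x < y" "x \<in> set_tree l" | "y < x" "x \<in> set_tree r"
    using Node.prems by fastforce
  then show ?case
  proof cases
    case 1
    then show ?thesis using ancestors_root[OF Node.prems(2)] by simp
  next
    case 2
    have "y \<notin> ancestors p l x" using Node.prems(1) by (auto simp: ancestors_def)
    have "depth x (Node l y r) = Suc (card (ancestors p l x))"
      using 2 Node.IH(1) Node.prems by auto
    also have "\<dots> = card (ancestors p (Node l y r) x)"
      using ancestors_Node_left[OF Node.prems(1,2) 2(2)] fin \<open>y \<notin> ancestors p l x\<close> by simp
    finally show ?thesis .
  next
    case 3
    have "y \<notin> ancestors p r x" using Node.prems(1) by (auto simp: ancestors_def)
    have "depth x (Node l y r) = Suc (card (ancestors p r x))"
      using 3 Node.IH(2) Node.prems by auto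
    also have "\<dots> = card (ancestors p (Node l y r) x)"
      using ancestors_Node_right[OF Node.prems(1,2) 3(2)] fin \<open>y \<notin> ancestors p r x\<close> by simp
    finally show ?thesis .
  qed
qed simp

definition mtr_prefix :: "nat tree \<Rightarrow> nat list \<Rightarrow> nat \<Rightarrow> nat tree" where
  "mtr_prefix T A j = foldl (\<lambda>t x. mtr x t) T (take j A)"

lemma mtr_prefix_0 [simp]: "mtr_prefix T A 0 = T"
  by (simp add: mtr_prefix_def)

lemma mtr_prefix_Suc: "j < length A \<Longrightarrow> mtr_prefix T A (Suc j) = mtr (A ! j) (mtr_prefix T A j)"
  by (simp add: mtr_prefix_def take_Suc_conv_app_nth)

lemma set_tree_mtr_prefix [simp]: "set_tree (mtr_prefix T A j) = set_tree T"
proof -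
  have "set_tree (foldl (\<lambda>t x. mtr x t) T xs) = set_tree T" for xs
    by (induction xs arbitrary: T) auto
  then show ?thesis by (simp add: mtr_prefix_def)
qed

lemma mtr_cost_eq_sum: "mtr_cost T A = (\<Sum>j<length A. depth (A ! j) (mtr_prefix T A j) + 1)"
proof (induction A arbitrary: T)
  case (Cons x xs)
  have "mtr_prefix T (x # xs) (Suc j) = mtr_prefix (mtr x T) xs j" for j
    by (simp add: mtr_prefix_def)
  then show ?case using Cons by (simp add: sum.lessThan_Suc_shift del: sum.lessThan_Suc)
qed simp

lemma bst_mtr_prefix: "bst T \<Longrightarrow> set A \<subseteq> set_tree T \<Longrightarrow> bst (mtr_prefix T A j)"
proof -
  have "bst (foldl (\<lambda>t x. mtr x t) T xs)" if "bst T" "set xs \<subseteq> set_tree T" for xs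
    using that by (induction xs arbitrary: T) (auto simp: bst_mtr)
  moreover assume "bst T" "set A \<subseteq> set_tree T"
  ultimately show ?thesis unfolding mtr_prefix_def by (meson order_trans set_take_subset)
qed

definition last_access :: "'a list \<Rightarrow> nat \<Rightarrow> 'a \<Rightarrow> nat" where
  "last_access A j k = Max {i. i < j \<and> A ! i = k}"

lemma
  assumes "\<exists>i<j. A ! i = k"
  shows last_access_less: "last_access A j k < j"
    and nth_last_access: "A ! last_access A j k = k"
    and le_last_access: "i < j \<Longrightarrow> A ! i = k \<Longrightarrow> i \<le> last_access A j k"
proof -
  have "finite {i. i < j \<and> A ! i = k}" "{i. i < j \<and> A ! i = k} \<noteq> {}"
    using assms by auto
  then show "last_access A j k < j" "A ! last_access A j k = k"
    "i < j \<Longrightarrow> A ! i = k \<Longrightarrow> i \<le> last_access A j k"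
    unfolding last_access_def using Max_in by (blast, blast) (simp add: Max_ge)
qed

lemma last_access_map:
  assumes "inj \<pi>" "j \<le> length A"
  shows "last_access (map \<pi> A) j (\<pi> k) = last_access A j k"
proof -
  have "{i. i < j \<and> map \<pi> A ! i = \<pi> k} = {i. i < j \<and> A ! i = k}"
    using assms by (auto dest: injD)
  then show ?thesis by (simp add: last_access_def)
qed

definition access_prio :: "nat tree \<Rightarrow> nat list \<Rightarrow> nat \<Rightarrow> nat \<Rightarrow> int" where
  "access_prio T A j k =
     (if \<exists>i<j. A ! i = k then int (last_access A j k) + 1 else - int (depth k T))"

lemma access_prio_le: "access_prio T A j k \<le> int j"
  using last_access_less[of j A k] by (force simp: access_prio_def)

lemma access_prio_Suc:
  "access_prio T A (Suc j) = (access_prio T A j)(A ! j := int j + 1)"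
proof
  fix k
  show "access_prio T A (Suc j) k = ((access_prio T A j)(A ! j := int j + 1)) k"
  proof (cases "k = A ! j")
    case True
    then have "last_access A (Suc j) k = j"
      unfolding last_access_def by (intro Max_eqI) auto
    then show ?thesis using True by (auto simp: access_prio_def)
  next
    case False
    then have "{i. i < Suc j \<and> A ! i = k} = {i. i < j \<and> A ! i = k}" by (auto simp: less_Suc_eq)
    then show ?thesis using False by (auto simp: access_prio_def last_access_def less_Suc_eq)
  qed
qed

lemma access_prio_map:
  assumes "inj \<pi>" "j \<le> length S"
  shows "access_prio T (map \<pi> S) j (\<pi> u) =
    (if \<exists>i<j. S ! i = u then int (last_access S j u) + 1 else - int (depth (\<pi> u) T))"
proof -
  have "(\<exists>i<j. map \<pi> S ! i = \<pi> u) \<longleftrightarrow> (\<exists>i<j. S ! i = u)"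
    using assms by (auto simp: inj_eq)
  then show ?thesis using last_access_map[OF assms] by (simp add: access_prio_def)
qed

lemma prio_heap_mtr_prefix:
  assumes "bst T" "set A \<subseteq> set_tree T" "j \<le> length A"
  shows "prio_heap (access_prio T A j) (mtr_prefix T A j)"
  using assms(3)
proof (induction j)
  case 0
  have "access_prio T A 0 = (\<lambda>k. 0 - int (depth k T))" by (simp add: access_prio_def fun_eq_iff)
  then show ?case using prio_heap_depth[OF assms(1), of 0] by simp
next
  case (Suc j)
  have x: "A ! j \<in> set_tree (mtr_prefix T A j)" using Suc.prems assms(2) by auto
  have "\<forall>k \<in> set_tree (mtr_prefix T A j). access_prio T A j k < int j + 1"
    using access_prio_le by (simp add: order_le_less_trans)
  from prio_heap_mtr[OF bst_mtr_prefix[OF assms(1,2)] Suc.IH x this] Suc.prems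
  show ?case by (simp add: mtr_prefix_Suc access_prio_Suc del: fun_upd_apply)
qed

section \<open>The working set\<close>

lemma rho_Suc_less_Suc_iff:
  "rho S (Suc j) < Suc i \<longleftrightarrow> (\<forall>k<j. S ! k = S ! j \<longrightarrow> k < i)"
proof -
  define K where "K = {k. k < j \<and> S ! k = S ! j}"
  have K: "{k. 1 \<le> k \<and> k < Suc j \<and> S ! (k - 1) = S ! j} = Suc ` K"
    by (auto simp: K_def image_iff dest!: Suc_le_D)
  then have "(\<exists>k. 1 \<le> k \<and> k < Suc j \<and> S ! (k - 1) = S ! j) \<longleftrightarrow> K \<noteq> {}" by blast
  moreover have "finite (Suc ` K)" by (simp add: K_def)
  ultimately show ?thesis
    unfolding rho_def diff_Suc_1 K by (cases "K = {}") (auto simp: Max_less_iff K_def)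
qed

text \<open>Positions in \<open>rho\<close> and \<open>ws_set\<close> are 1-based while \<open>S ! j\<close> is 0-based, so the working set
  of the access \<open>S ! j\<close> is \<open>ws_set S (Suc j)\<close>.\<close>
definition ws_others :: "nat list \<Rightarrow> nat \<Rightarrow> nat set" where
  "ws_others S j = ws_set S (Suc j) - {S ! j}"

lemma mem_ws_others_iff:
  "u \<in> ws_others S j \<longleftrightarrow>
     u \<noteq> S ! j \<and> (\<exists>i<j. S ! i = u \<and> (\<forall>k<j. S ! k = S ! j \<longrightarrow> k < i))"
proof
  assume "u \<in> ws_others S j"
  then obtain i where "u = S ! i" "rho S (Suc j) < Suc i" "i \<le> j" "u \<noteq> S ! j"
    unfolding ws_others_def ws_set_def by (auto simp: gr0_conv_Suc)
  then show "u \<noteq> S ! j \<and> (\<exists>i<j. S ! i = u \<and> (\<forall>k<j. S ! k = S ! j \<longrightarrow> k < i))"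
    by (auto simp: rho_Suc_less_Suc_iff le_less)
next
  assume "u \<noteq> S ! j \<and> (\<exists>i<j. S ! i = u \<and> (\<forall>k<j. S ! k = S ! j \<longrightarrow> k < i))"
  then obtain i where "u \<noteq> S ! j" "i < j" "u = S ! (Suc i - 1)" "rho S (Suc j) < Suc i"
    by (auto simp: rho_Suc_less_Suc_iff)
  then show "u \<in> ws_others S j"
    unfolding ws_others_def ws_set_def by fastforce
qed

lemma ws_others_subset: "j < length S \<Longrightarrow> ws_others S j \<subseteq> set S"
  by (auto simp: mem_ws_others_iff)

lemma card_ws_set_Suc:
  assumes "j < length S"
  shows "card (ws_set S (Suc j)) = Suc (card (ws_others S j))"
proof -
  have "rho S (Suc j) < Suc j" by (simp add: rho_Suc_less_Suc_iff)
  then have "S ! j \<in> ws_set S (Suc j)"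
    unfolding ws_set_def by (intro CollectI exI[of _ "Suc j"]) simp
  moreover have "finite (ws_others S j)"
    using ws_others_subset[OF assms] finite_subset by blast
  ultimately show ?thesis
    unfolding ws_others_def by (metis card_Suc_Diff1 finite_Diff2 finite.emptyI finite_insert)
qed

lemma WS_nonneg: "WS S \<ge> 0"
  unfolding WS_def
proof (rule sum_nonneg)
  fix j assume "j \<in> {1..length S}"
  then obtain i where "j = Suc i" "i < length S" by (cases j) auto
  then show "0 \<le> log 2 (real (card (ws_set S j)))" using card_ws_set_Suc by simp
qed

definition ws_after :: "nat list \<Rightarrow> nat \<Rightarrow> nat \<Rightarrow> nat set" where
  "ws_after S j u = {v \<in> ws_others S j. last_access S j u \<le> last_access S j v}"

section \<open>Random relabelling\<close>

definition adjacent_under :: "('a \<Rightarrow> 'b::linorder) \<Rightarrow> 'a set \<Rightarrow> 'a \<Rightarrow> 'a \<Rightarrow> bool" where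
  "adjacent_under \<pi> A x u \<longleftrightarrow>
     (\<forall>v \<in> A. v \<noteq> u \<longrightarrow> \<not> (min (\<pi> x) (\<pi> u) < \<pi> v \<and> \<pi> v < max (\<pi> x) (\<pi> u)))"

lemma card_adjacent_under_le_2:
  assumes "inj \<pi>" "x \<notin> A" "finite A"
  shows "card {v \<in> A. adjacent_under \<pi> A x v} \<le> 2"
proof -
  define U where "U = {v \<in> A. adjacent_under \<pi> A x v \<and> \<pi> x < \<pi> v}"
  define L where "L = {v \<in> A. adjacent_under \<pi> A x v \<and> \<pi> v < \<pi> x}"
  have "\<pi> v \<noteq> \<pi> x" if "v \<in> A" for v using that assms(1,2) by (auto dest: injD)
  then have "{v \<in> A. adjacent_under \<pi> A x v} = U \<union> L"
    by (auto simp: U_def L_def linorder_neq_iff)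
  moreover have "a = b" if "a \<in> U" "b \<in> U" for a b
    using that assms(1) unfolding U_def adjacent_under_def
    by (cases "\<pi> a" "\<pi> b" rule: linorder_cases) (auto dest: injD)
  then have "card U \<le> 1" using assms(3) by (simp add: card_le_Suc0_iff_eq U_def)
  moreover have "a = b" if "a \<in> L" "b \<in> L" for a b
    using that assms(1) unfolding L_def adjacent_under_def
    by (cases "\<pi> a" "\<pi> b" rule: linorder_cases) (auto dest: injD)
  then have "card L \<le> 1" using assms(3) by (simp add: card_le_Suc0_iff_eq L_def)
  ultimately show ?thesis using card_Un_le[of U L] by simp
qed

lemma adjacent_under_transpose:
  assumes "x \<notin> A" "u \<in> A" "v \<in> A"
  shows "adjacent_under (\<pi> \<circ> Transposition.transpose u v) A x v = adjacent_under \<pi> A x u"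
proof -
  have "Transposition.transpose u v ` A = A" using assms(2,3) by (simp add: transpose_image_eq)
  moreover have "Transposition.transpose u v x = x" using assms by (auto simp: Transposition.transpose_def)
  ultimately show ?thesis
    unfolding adjacent_under_def by (smt (verit) comp_apply imageE imageI transpose_eq_iff)
qed

lemma card_permutes_adjacent_under_eq:
  assumes "A \<subseteq> K" "x \<notin> A" "u \<in> A" "v \<in> A"
  shows "card {\<pi>. \<pi> permutes K \<and> adjacent_under \<pi> A x v} =
         card {\<pi>. \<pi> permutes K \<and> adjacent_under \<pi> A x u}"
proof -
  define t where "t = Transposition.transpose u v"
  have t: "t permutes K" unfolding t_def using assms by (intro permutes_swap_id) auto
  have tt: "\<pi> \<circ> t \<circ> t = \<pi>" for \<pi> :: "'a \<Rightarrow> 'a" by (simp add: t_def fun_eq_iff)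
  have adj: "adjacent_under (\<pi> \<circ> t) A x v = adjacent_under \<pi> A x u" for \<pi> :: "'a \<Rightarrow> 'a"
    unfolding t_def using adjacent_under_transpose[OF assms(2-4)] .
  have img: "(\<lambda>\<pi>. \<pi> \<circ> t) ` {\<pi>. \<pi> permutes K \<and> adjacent_under \<pi> A x u} =
        {\<pi>. \<pi> permutes K \<and> adjacent_under \<pi> A x v}"
  proof (intro equalityI subsetI)
    fix \<sigma> assume "\<sigma> \<in> {\<pi>. \<pi> permutes K \<and> adjacent_under \<pi> A x v}"
    then have "\<sigma> \<circ> t permutes K" "adjacent_under (\<sigma> \<circ> t) A x u"
      using permutes_compose[OF t] adj[of "\<sigma> \<circ> t"] tt[of \<sigma>] by auto
    then show "\<sigma> \<in> (\<lambda>\<pi>. \<pi> \<circ> t) ` {\<pi>. \<pi> permutes K \<and> adjacent_under \<pi> A x u}"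
      using tt[of \<sigma>] by (metis (mono_tags, lifting) image_eqI mem_Collect_eq)
  next
    fix \<sigma> assume "\<sigma> \<in> (\<lambda>\<pi>. \<pi> \<circ> t) ` {\<pi>. \<pi> permutes K \<and> adjacent_under \<pi> A x u}"
    then show "\<sigma> \<in> {\<pi>. \<pi> permutes K \<and> adjacent_under \<pi> A x v}"
      using permutes_compose[OF t] adj by auto
  qed
  have "inj_on (\<lambda>\<pi>. \<pi> \<circ> t) {\<pi>. \<pi> permutes K \<and> adjacent_under \<pi> A x u}"
    by (rule inj_on_inverseI[where g = "\<lambda>\<pi>. \<pi> \<circ> t"]) (rule tt)
  from card_image[OF this] show ?thesis unfolding img .
qed

lemma card_permutes_adjacent_under_le:
  assumes "finite K" "A \<subseteq> K" "x \<notin> A" "u \<in> A"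
  shows "card {\<pi>. \<pi> permutes K \<and> adjacent_under \<pi> A x u} * card A \<le> 2 * card {\<pi>. \<pi> permutes K}"
proof -
  define P where "P = {\<pi>. \<pi> permutes K}"
  have fin: "finite A" "finite P"
    using assms finite_subset finite_permutations unfolding P_def by blast+
  have "card {\<pi>. \<pi> permutes K \<and> adjacent_under \<pi> A x u} * card A =
        (\<Sum>v\<in>A. card {\<pi> \<in> P. adjacent_under \<pi> A x v})"
    using card_permutes_adjacent_under_eq[OF assms(2-4)] by (simp add: P_def)
  also have "\<dots> = (\<Sum>\<pi>\<in>P. card {v \<in> A. adjacent_under \<pi> A x v})"
    using sum.swap_restrict[OF fin, of "\<lambda>_ _. 1::nat"] by simp
  also have "\<dots> \<le> (\<Sum>\<pi>\<in>P. 2)"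
    using card_adjacent_under_le_2[OF permutes_inj assms(3) fin(1)] by (intro sum_mono) (auto simp: P_def)
  finally show ?thesis by (simp add: P_def)
qed

lemma harm_le_one_plus_ln: "n \<ge> 1 \<Longrightarrow> harm n \<le> 1 + ln (real n)"
  using euler_mascheroni_sequence_decreasing[of 1 n] by (simp add: harm_def)

lemma harm_le_one_plus_log2: "harm n \<le> 1 + log 2 (real (Suc n))"
proof -
  have "harm n \<le> (harm (Suc n) :: real)" by (rule harm_mono) simp
  also have "\<dots> \<le> 1 + ln (real (Suc n))" by (rule harm_le_one_plus_ln) simp
  also have "ln (real (Suc n)) \<le> log 2 (real (Suc n))"
  proof -
    have "0 \<le> ln (real (Suc n))" "0 < ln (2::real)" "ln (2::real) \<le> 1"
      using ln_le_minus_one[of 2] by auto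
    then show ?thesis
      using mult_left_le_one_le[of "ln (real (Suc n))" "ln 2"] by (simp add: log_def field_simps)
  qed
  finally show ?thesis by simp
qed

lemma sum_inverse_le_harm:
  assumes "inj_on r W" "r ` W \<subseteq> {1..card W}"
  shows "(\<Sum>u\<in>W. 1 / real (r u)) \<le> harm (card W)"
proof -
  have "(\<Sum>u\<in>W. 1 / real (r u)) = (\<Sum>i\<in>r ` W. 1 / real i)"
    by (simp add: sum.reindex[OF assms(1)])
  also have "\<dots> \<le> (\<Sum>i = 1..card W. 1 / real i)"
    using assms(2) by (intro sum_mono2) auto
  finally show ?thesis by (simp add: harm_def divide_inverse)
qed

lemma sum_inverse_card_ws_after_le:
  assumes "j < length S"
  shows "(\<Sum>u\<in>ws_others S j. 1 / real (card (ws_after S j u))) \<le> harm (card (ws_others S j))"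
proof (rule sum_inverse_le_harm)
  let ?W = "ws_others S j"
  have fin: "finite ?W" using ws_others_subset[OF assms] finite_subset by blast
  have accessed: "\<exists>i<j. S ! i = u" if "u \<in> ?W" for u using that by (auto simp: mem_ws_others_iff)
  have "card (ws_after S j v) < card (ws_after S j u)"
    if "u \<in> ?W" "v \<in> ?W" "last_access S j u < last_access S j v" for u v
  proof (rule psubset_card_mono)
    have "ws_after S j v \<subseteq> ws_after S j u" "u \<in> ws_after S j u - ws_after S j v"
      using that by (auto simp: ws_after_def)
    then show "ws_after S j v \<subset> ws_after S j u" by blast
  qed (use fin in \<open>simp add: ws_after_def\<close>)
  moreover have "inj_on (last_access S j) ?W"
    by (rule inj_on_inverseI[where g = "(!) S"]) (rule nth_last_access[OF accessed])
  ultimately show "inj_on (\<lambda>u. card (ws_after S j u)) ?W"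
    unfolding inj_on_def by (metis less_irrefl linorder_neqE_nat)
  show "(\<lambda>u. card (ws_after S j u)) ` ?W \<subseteq> {1..card ?W}"
  proof (rule image_subsetI)
    fix u assume "u \<in> ?W"
    then have "ws_after S j u \<subseteq> ?W" "u \<in> ws_after S j u" by (auto simp: ws_after_def)
    then show "card (ws_after S j u) \<in> {1..card ?W}"
      using fin by (auto simp: card_mono Suc_le_eq card_gt_0_iff dest: finite_subset)
  qed
qed

section \<open>The cost of an access\<close>

lemma card_unaccessed_ancestors_le:
  assumes "bst T" "set A \<subseteq> set_tree T" "j < length A"
  shows "card {y \<in> ancestors (access_prio T A j) (mtr_prefix T A j) (A ! j).
                 access_prio T A j y \<le> 0}
         \<le> (if \<exists>i<j. A ! i = A ! j then 0 else depth (A ! j) T)"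
proof -
  define p where "p = access_prio T A j"
  define x where "x = A ! j"
  have x: "x \<in> set_tree (mtr_prefix T A j)" using assms by (auto simp: x_def)
  show ?thesis
  proof (cases "\<exists>i<j. A ! i = x")
    case True
    then have "0 < p x" by (simp add: p_def access_prio_def)
    then have "{y \<in> ancestors p (mtr_prefix T A j) x. p y \<le> 0} = {}"
      using prio_less_ancestor[OF _ x, of _ p] by force
    then have "card {y \<in> ancestors p (mtr_prefix T A j) x. p y \<le> 0} = 0" by (simp only: card.empty)
    then show ?thesis using True unfolding p_def x_def by simp
  next
    case False
    define p0 where "p0 = (\<lambda>k. 0 - int (depth k T))"
    have p0: "p k = p0 k" if "p k \<le> 0" for k
      using that by (simp add: p_def p0_def access_prio_def split: if_splits)
    have "{y \<in> ancestors p (mtr_prefix T A j) x. p y \<le> 0} \<subseteq> ancestors p0 T x"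
      unfolding ancestors_def using p0 by fastforce
    then have "card {y \<in> ancestors p (mtr_prefix T A j) x. p y \<le> 0} \<le> card (ancestors p0 T x)"
      by (rule card_mono[rotated]) (simp add: ancestors_def)
    also have "\<dots> = depth x T"
      using depth_eq_card_ancestors[OF assms(1) prio_heap_depth[OF assms(1), of 0]] x
      by (simp add: p0_def)
    finally show ?thesis using False unfolding p_def x_def by auto
  qed
qed

lemma accessed_ancestors_subset:
  assumes perm: "\<pi> permutes set_tree T" and "bst T" "set S \<subseteq> set_tree T" "j < length S"
  defines "p \<equiv> access_prio T (map \<pi> S) j"
  shows "{y \<in> ancestors p (mtr_prefix T (map \<pi> S) j) (\<pi> (S ! j)). 0 < p y}
         \<subseteq> \<pi> ` {u \<in> ws_others S j. adjacent_under \<pi> (ws_after S j u) (S ! j) u}"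
proof
  fix y assume y: "y \<in> {y \<in> ancestors p (mtr_prefix T (map \<pi> S) j) (\<pi> (S ! j)). 0 < p y}"
  have inj: "inj \<pi>" using perm by (rule permutes_inj)
  have p: "p (\<pi> v) = (if \<exists>i<j. S ! i = v then int (last_access S j v) + 1 else - int (depth (\<pi> v) T))"
    for v unfolding p_def using access_prio_map[OF inj] assms(4) by simp
  have in_T: "\<pi> v \<in> set_tree T" if "v \<in> set S" for v
    using that assms(3) permutes_in_image[OF perm] by auto
  have anc: "p (\<pi> v) < p y"
    if "v \<in> set S" "\<pi> v \<noteq> y" "min (\<pi> (S ! j)) y \<le> \<pi> v" "\<pi> v \<le> max (\<pi> (S ! j)) y" for v
    using y that in_T by (auto simp: ancestors_def)
  obtain i where i: "i < j" "y = \<pi> (S ! i)"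
    using y assms(4) by (auto simp: p_def access_prio_def split: if_splits)
  define u where "u = S ! i"
  have u_accessed: "\<exists>i<j. S ! i = u" using i by (auto simp: u_def)
  then have py: "p y = int (last_access S j u) + 1" by (simp add: i(2) p u_def)
  have "u \<noteq> S ! j" using y i by (auto simp: u_def ancestors_def)
  moreover have "k < last_access S j u" if "k < j" "S ! k = S ! j" for k
  proof -
    have "\<pi> (S ! j) \<in> set_tree (mtr_prefix T (map \<pi> S) j)" using in_T assms(4) by simp
    then have "p (\<pi> (S ! j)) < p y" using y prio_less_ancestor by blast
    moreover have "\<exists>i<j. S ! i = S ! j" using that by blast
    ultimately show ?thesis
      using that le_last_access[of j S "S ! j" k] py by (simp add: p)
  qed
  ultimately have "u \<in> ws_others S j"
    using last_access_less[OF u_accessed] nth_last_access[OF u_accessed]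
    by (auto simp: mem_ws_others_iff)
  moreover have "adjacent_under \<pi> (ws_after S j u) (S ! j) u"
    unfolding adjacent_under_def
  proof (intro ballI impI notI)
    fix v assume v: "v \<in> ws_after S j u" "v \<noteq> u"
      and between: "min (\<pi> (S ! j)) (\<pi> u) < \<pi> v \<and> \<pi> v < max (\<pi> (S ! j)) (\<pi> u)"
    have "v \<in> set S" "\<exists>i<j. S ! i = v" "last_access S j u \<le> last_access S j v"
      using v assms(4) ws_others_subset by (auto simp: ws_after_def mem_ws_others_iff)
    moreover have "\<pi> v \<noteq> y" using v(2) inj i by (auto simp: u_def inj_eq)
    ultimately show False
      using anc[of v] between py by (auto simp: p i(2) u_def[symmetric])
  qed
  ultimately show "y \<in> \<pi> ` {u \<in> ws_others S j. adjacent_under \<pi> (ws_after S j u) (S ! j) u}"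
    using i by (auto simp: u_def)
qed

lemma access_depth_le:
  assumes perm: "\<pi> permutes set_tree T" and "bst T" "set S \<subseteq> set_tree T" "j < length S"
  shows "depth (map \<pi> S ! j) (mtr_prefix T (map \<pi> S) j)
         \<le> (if \<exists>i<j. map \<pi> S ! i = map \<pi> S ! j then 0 else depth (map \<pi> S ! j) T)
           + card {u \<in> ws_others S j. adjacent_under \<pi> (ws_after S j u) (S ! j) u}"
proof -
  define A where "A = map \<pi> S"
  define p where "p = access_prio T A j"
  define t where "t = mtr_prefix T A j"
  define E where "E = {u \<in> ws_others S j. adjacent_under \<pi> (ws_after S j u) (S ! j) u}"
  have finE: "finite E"
    using ws_others_subset[OF assms(4)] by (auto simp: E_def intro: finite_subset)
  have A: "set A \<subseteq> set_tree T" "j < length A"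
    using assms permutes_in_image[OF perm] by (auto simp: A_def)
  have "depth (A ! j) t = card (ancestors p t (A ! j))"
    unfolding p_def t_def using A assms(2)
    by (intro depth_eq_card_ancestors bst_mtr_prefix prio_heap_mtr_prefix) auto
  also have "ancestors p t (A ! j) =
      {y \<in> ancestors p t (A ! j). p y \<le> 0} \<union> {y \<in> ancestors p t (A ! j). 0 < p y}"
    by auto
  also have "card \<dots> \<le> card {y \<in> ancestors p t (A ! j). p y \<le> 0} + card {y \<in> ancestors p t (A ! j). 0 < p y}"
    by (rule card_Un_le)
  also have "card {y \<in> ancestors p t (A ! j). 0 < p y} \<le> card (\<pi> ` E)"
  proof (rule card_mono)
    show "finite (\<pi> ` E)" using finE by simp
    show "{y \<in> ancestors p t (A ! j). 0 < p y} \<subseteq> \<pi> ` E"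
      using accessed_ancestors_subset[OF assms] assms(4) by (simp add: A_def p_def t_def E_def)
  qed
  also have "card (\<pi> ` E) \<le> card E" using finE by (rule card_image_le)
  finally show ?thesis
    using card_unaccessed_ancestors_le[OF assms(2) A] unfolding A_def p_def t_def E_def
    by linarith
qed

lemma sum_first_occurrences:
  "(\<Sum>j<length A. if \<exists>i<j. A ! i = A ! j then 0 else f (A ! j)) = (\<Sum>k\<in>set A. f k)"
proof -
  define F where "F = {j \<in> {..<length A}. \<not> (\<exists>i<j. A ! i = A ! j)}"
  have "bij_betw ((!) A) F (set A)"
  proof (rule bij_betw_imageI)
    show "inj_on ((!) A) F"
    proof (rule inj_onI)
      fix a b assume "a \<in> F" "b \<in> F" "A ! a = A ! b"
      then show "a = b" by (cases a b rule: linorder_cases) (auto simp: F_def)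
    qed
    show "(!) A ` F = set A"
    proof (intro equalityI subsetI)
      fix k assume "k \<in> set A"
      then have ex: "\<exists>j. j < length A \<and> A ! j = k" by (simp add: in_set_conv_nth)
      define j where "j = (LEAST j. j < length A \<and> A ! j = k)"
      have "j < length A" "A ! j = k" using LeastI_ex[OF ex] by (simp_all add: j_def)
      moreover have "\<not> (i < length A \<and> A ! i = k)" if "i < j" for i
        using not_less_Least[of i] that unfolding j_def by blast
      moreover have "\<not> (\<exists>i<j. A ! i = A ! j)"
        using calculation by auto
      ultimately show "k \<in> (!) A ` F" unfolding F_def by force
    qed (auto simp: F_def)
  qed
  then have "(\<Sum>j\<in>F. f (A ! j)) = (\<Sum>k\<in>set A. f k)" by (rule sum.reindex_bij_betw)
  moreover have "(\<Sum>j<length A. if \<exists>i<j. A ! i = A ! j then 0 else f (A ! j)) = (\<Sum>j\<in>F. f (A ! j))"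
    unfolding F_def sum.inter_filter[OF finite_lessThan] by (rule sum.cong) auto
  ultimately show ?thesis by simp
qed

lemma mtr_cost_map_le:
  assumes perm: "\<pi> permutes set_tree T" and "bst T" "set S \<subseteq> set_tree T"
  shows "mtr_cost T (map \<pi> S) \<le> length S + (\<Sum>k\<in>set_tree T. depth k T)
           + (\<Sum>j<length S. card {u \<in> ws_others S j. adjacent_under \<pi> (ws_after S j u) (S ! j) u})"
proof -
  let ?E = "\<lambda>j. card {u \<in> ws_others S j. adjacent_under \<pi> (ws_after S j u) (S ! j) u}"
  have first: "(\<Sum>j<length S. if \<exists>i<j. map \<pi> S ! i = map \<pi> S ! j then 0 else depth (map \<pi> S ! j) T)
      = (\<Sum>k\<in>set (map \<pi> S). depth k T)"
    using sum_first_occurrences[of "map \<pi> S" "\<lambda>k. depth k T"] by (simp only: length_map)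
  have "mtr_cost T (map \<pi> S) = (\<Sum>j<length S. depth (map \<pi> S ! j) (mtr_prefix T (map \<pi> S) j) + 1)"
    by (simp add: mtr_cost_eq_sum)
  also have "\<dots> \<le> (\<Sum>j<length S. ((if \<exists>i<j. map \<pi> S ! i = map \<pi> S ! j then 0
                                     else depth (map \<pi> S ! j) T) + ?E j) + 1)"
    using access_depth_le[OF assms] by (intro sum_mono) simp
  also have "\<dots> = (\<Sum>k\<in>set (map \<pi> S). depth k T) + (\<Sum>j<length S. ?E j) + length S"
    unfolding sum.distrib first by simp
  also have "(\<Sum>k\<in>set (map \<pi> S). depth k T) \<le> (\<Sum>k\<in>set_tree T. depth k T)"
    using assms(3) permutes_in_image[OF perm] by (intro sum_mono2) auto
  finally show ?thesis by simp
qed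

lemma card_permutes_adjacent_ws_after_le:
  assumes "finite K" "set S \<subseteq> K" "j < length S" "u \<in> ws_others S j"
  shows "real (card {\<pi>. \<pi> permutes K \<and> adjacent_under \<pi> (ws_after S j u) (S ! j) u})
         \<le> 2 * real (card {\<pi>. \<pi> permutes K}) / real (card (ws_after S j u))"
proof -
  have sub: "ws_after S j u \<subseteq> K"
    using ws_others_subset[OF assms(3)] assms(2) by (auto simp: ws_after_def)
  have R: "S ! j \<notin> ws_after S j u" "u \<in> ws_after S j u"
    using assms(4) by (auto simp: ws_after_def ws_others_def)
  have pos: "0 < card (ws_after S j u)"
    using R(2) sub assms(1) by (auto simp: card_gt_0_iff intro: finite_subset)
  have "card {\<pi>. \<pi> permutes K \<and> adjacent_under \<pi> (ws_after S j u) (S ! j) u}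
      * card (ws_after S j u) \<le> 2 * card {\<pi>. \<pi> permutes K}"
    by (rule card_permutes_adjacent_under_le[OF assms(1) sub R])
  then have "real (card {\<pi>. \<pi> permutes K \<and> adjacent_under \<pi> (ws_after S j u) (S ! j) u})
      * real (card (ws_after S j u)) \<le> 2 * real (card {\<pi>. \<pi> permutes K})"
    unfolding of_nat_mult[symmetric] of_nat_numeral[symmetric, where 'a = real] by (rule of_nat_mono)
  with pos show ?thesis by (simp add: pos_le_divide_eq)
qed

lemma sum_card_adjacent_ws_after_le:
  assumes "finite K" "set S \<subseteq> K" "j < length S"
  shows "(\<Sum>\<pi> | \<pi> permutes K.
            real (card {u \<in> ws_others S j. adjacent_under \<pi> (ws_after S j u) (S ! j) u}))
         \<le> 2 * real (card {\<pi>. \<pi> permutes K}) * (1 + log 2 (real (card (ws_set S (Suc j)))))"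
proof -
  define N where "N = real (card {\<pi>. \<pi> permutes K})"
  define W where "W = ws_others S j"
  have fin: "finite W" "finite {\<pi>. \<pi> permutes K}"
    using ws_others_subset[OF assms(3)] finite_permutations[OF assms(1)]
    by (auto simp: W_def intro: finite_subset)
  have "(\<Sum>\<pi> | \<pi> permutes K. real (card {u \<in> W. adjacent_under \<pi> (ws_after S j u) (S ! j) u}))
      = (\<Sum>u\<in>W. real (card {\<pi>. \<pi> permutes K \<and> adjacent_under \<pi> (ws_after S j u) (S ! j) u}))"
    using sum.swap_restrict[OF fin, of "\<lambda>_ _. 1::real" "\<lambda>u \<pi>. adjacent_under \<pi> (ws_after S j u) (S ! j) u"]
    by simp
  also have "\<dots> \<le> (\<Sum>u\<in>W. 2 * N / real (card (ws_after S j u)))"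
    using card_permutes_adjacent_ws_after_le[OF assms] by (intro sum_mono) (simp add: N_def W_def)
  also have "\<dots> = 2 * N * (\<Sum>u\<in>W. 1 / real (card (ws_after S j u)))"
    by (simp add: sum_distrib_left)
  also have "\<dots> \<le> 2 * N * harm (card W)"
    using sum_inverse_card_ws_after_le[OF assms(3)] by (intro mult_left_mono) (simp_all add: N_def W_def)
  also have "\<dots> \<le> 2 * N * (1 + log 2 (real (card (ws_set S (Suc j)))))"
    using harm_le_one_plus_log2[of "card W"] card_ws_set_Suc[OF assms(3)]
    by (intro mult_left_mono) (simp_all add: N_def W_def)
  finally show ?thesis by (simp add: N_def W_def)
qed

lemma sum_mtr_cost_le:
  assumes "bst T" "set S \<subseteq> set_tree T"
  shows "(\<Sum>\<pi> | \<pi> permutes set_tree T. real (mtr_cost T (map \<pi> S)))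
         \<le> real (card {\<pi>. \<pi> permutes set_tree T})
           * (2 * WS S + 3 * real (length S) + (\<Sum>k\<in>set_tree T. real (depth k T)))"
proof -
  define P where "P = {\<pi>. \<pi> permutes set_tree T}"
  define D where "D = (\<Sum>k\<in>set_tree T. real (depth k T))"
  let ?E = "\<lambda>\<pi> j. real (card {u \<in> ws_others S j. adjacent_under \<pi> (ws_after S j u) (S ! j) u})"
  let ?L = "\<lambda>j. 1 + log 2 (real (card (ws_set S (Suc j))))"
  have "(\<Sum>\<pi>\<in>P. real (mtr_cost T (map \<pi> S))) \<le> (\<Sum>\<pi>\<in>P. real (length S) + D + (\<Sum>j<length S. ?E \<pi> j))"
    using mtr_cost_map_le[OF _ assms] unfolding P_def D_def
    by (intro sum_mono) (simp flip: of_nat_sum of_nat_add)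
  also have "\<dots> = real (card P) * (real (length S) + D) + (\<Sum>j<length S. \<Sum>\<pi>\<in>P. ?E \<pi> j)"
    by (simp add: sum.distrib sum.swap[of _ P])
  also have "(\<Sum>j<length S. \<Sum>\<pi>\<in>P. ?E \<pi> j) \<le> (\<Sum>j<length S. 2 * real (card P) * ?L j)"
    using sum_card_adjacent_ws_after_le[OF _ assms(2)] unfolding P_def by (intro sum_mono) simp
  also have "(\<Sum>j<length S. 2 * real (card P) * ?L j) = 2 * real (card P) * (real (length S) + WS S)"
    unfolding sum_distrib_left[symmetric] WS_def sum.distrib by (simp add: sum.atLeast1_atMost_eq)
  finally show ?thesis unfolding P_def D_def by (simp add: algebra_simps)
qed

theorem mainTheorem9:
  "\<exists>c::real. c > 0 \<and>
     (\<forall>n m (S::nat list) (T::nat tree).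
        n \<ge> 1 \<longrightarrow> m \<ge> 1 \<longrightarrow> length S = m \<longrightarrow> set S \<subseteq> {1..n} \<longrightarrow>
        bst T \<longrightarrow> set_tree T = {1..n} \<longrightarrow>
        expected_mtr n T S \<le> c * (WS S + real m + (\<Sum>i = 1..n. real (depth i T))))"
proof (intro exI[of _ 3] conjI allI impI)
  fix n m :: nat and S :: "nat list" and T :: "nat tree"
  assume "length S = m" "set S \<subseteq> {1..n}" "bst T" "set_tree T = {1..n}"
  moreover have "card {\<pi>. \<pi> permutes {1..n}} > 0"
    by (simp add: card_permutations)
  ultimately have "expected_mtr n T S \<le> 2 * WS S + 3 * real m + (\<Sum>i = 1..n. real (depth i T))"
    using sum_mtr_cost_le[of T S] by (simp add: expected_mtr_def pos_divide_le_eq mult.commute)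
  also have "\<dots> \<le> 3 * (WS S + real m + (\<Sum>i = 1..n. real (depth i T)))"
    using WS_nonneg[of S] by (simp add: sum_nonneg)
  finally show "expected_mtr n T S \<le> 3 * (WS S + real m + (\<Sum>i = 1..n. real (depth i T)))" .
qed simp

end
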